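(* Let $n\ge 2$. Then $\mathrm{A}=\Gamma^{\overline{01}}=\Gamma^{\overline{23}}$, where for a subspace $L\subseteq\mathrm{C}$ we write $\Gamma^{L}=\{T\in\mathrm{C}^\times: T L T^{-1}\subseteq L\}$.
   Context: Let $\mathrm{C}$ be either the real Clifford algebra $C\ell_{p,q}$ with $p+q=n$, or the complex Clifford algebra $C\ell(\mathbb{C}^n)$. It has identity $e$ and generators $e_1,\dots,e_n$ satisfying $e_ae_b+e_be_a=2\eta_{ab}e$. In the real case $\eta=\mathrm{diag}(1,\dots,1,-1,\dots,-1)$ with $p$ entries $+1$ and $q$ entries $-1$. In the complex case $\eta=I_n$. $\mathrm{C}^k$ is the grade-$k$ subspace, spanned by the products $e_{a_1}\cdots e_{a_k}$ with $a_1<\dots<a_k$. The reversion $U\mapsto\tilde U$ is the linear anti-automorphism acting on $\mathrm{C}^k$ as multiplication by $(-1)^{k(k-1)/2}$. For $m=0,1,2,3$ let $\mathrm{C}^{\overline m}=\bigoplus_{k\equiv m \pmod 4}\mathrm{C}^k$, and $\mathrm{C}^{\overline{kl}}=\mathrm{C}^{\overline k}\oplus\mathrm{C}^{\overline l}$. $\Gamma^{\overline{kl}}$ denotes $\Gamma^{L}$ with $L=\mathrm{C}^{\overline{kl}}$. $\mathrm{C}^\times$ is the group of invertible elements of $\mathrm{C}$. $\mathrm{Z}$ is the center of $\mathrm{C}$: $\mathrm{Z}=\mathrm{C}^0$ for $n$ even and $\mathrm{Z}=\mathrm{C}^0\oplus\mathrm{C}^n$ for $n$ odd. $\mathrm{Z}^\times$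 is the set of invertible elements of $\mathrm{Z}$. Define $\mathrm{A}:=\{T\in\mathrm{C}^\times:\ \tilde T T\in\mathrm{Z}^\times\}$. *)

theory Defs
  imports Complex_Main
begin

text \<open>Clifford algebra with n generators e_0,...,e_{n-1} (0-based indexing) and
diagonal metric eta, over a field 'a.  An element is a coefficient function on
basis blades; a blade is a subset of {..<n} (the set of indices a_1<...<a_k).\<close>

definition cl_carrier :: "nat \<Rightarrow> (nat set \<Rightarrow> 'a::field) set" where
  "cl_carrier n = {x. \<forall>A. x A \<noteq> 0 \<longrightarrow> A \<subseteq> {..<n}}"

text \<open>Sign/scalar of the product of basis blades e_A e_B = bsign A B e_(A sym-diff B).\<close>
definition bsign :: "(nat \<Rightarrow> 'a::field) \<Rightarrow> nat set \<Rightarrow> nat set \<Rightarrow> 'a" where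
  "bsign eta A B = (-1) ^ card {(a, b). a \<in> A \<and> b \<in> B \<and> b < a} * (\<Prod>c\<in>A \<inter> B. eta c)"

definition cl_mult :: "(nat \<Rightarrow> 'a::field) \<Rightarrow> nat \<Rightarrow> (nat set \<Rightarrow> 'a) \<Rightarrow> (nat set \<Rightarrow> 'a) \<Rightarrow> (nat set \<Rightarrow> 'a)" where
  "cl_mult eta n x y = (\<lambda>C. if C \<subseteq> {..<n} then
      (\<Sum>A\<in>Pow {..<n}. x A * y ((A - C) \<union> (C - A)) * bsign eta A ((A - C) \<union> (C - A)))
     else 0)"

definition cl_one :: "nat set \<Rightarrow> 'a::field" where
  "cl_one = (\<lambda>A. if A = {} then 1 else 0)"

definition cl_units :: "(nat \<Rightarrow> 'a::field) \<Rightarrow> nat \<Rightarrow> (nat set \<Rightarrow> 'a) set" where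
  "cl_units eta n = {T \<in> cl_carrier n. \<exists>S \<in> cl_carrier n.
      cl_mult eta n T S = cl_one \<and> cl_mult eta n S T = cl_one}"

definition cl_inv :: "(nat \<Rightarrow> 'a::field) \<Rightarrow> nat \<Rightarrow> (nat set \<Rightarrow> 'a) \<Rightarrow> (nat set \<Rightarrow> 'a)" where
  "cl_inv eta n T = (THE S. S \<in> cl_carrier n \<and> cl_mult eta n T S = cl_one \<and> cl_mult eta n S T = cl_one)"

definition cl_rev :: "(nat set \<Rightarrow> 'a::field) \<Rightarrow> (nat set \<Rightarrow> 'a)" where
  "cl_rev x = (\<lambda>A. (-1) ^ (card A * (card A - 1) div 2) * x A)"

definition cl_grade :: "nat \<Rightarrow> nat \<Rightarrow> (nat set \<Rightarrow> 'a::field) set" where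
  "cl_grade n k = {x \<in> cl_carrier n. \<forall>A. x A \<noteq> 0 \<longrightarrow> card A = k}"

definition cl_bar2 :: "nat \<Rightarrow> nat \<Rightarrow> nat \<Rightarrow> (nat set \<Rightarrow> 'a::field) set" where
  "cl_bar2 n k l = {x \<in> cl_carrier n. \<forall>A. x A \<noteq> 0 \<longrightarrow> (card A mod 4 = k \<or> card A mod 4 = l)}"

definition cl_center :: "nat \<Rightarrow> (nat set \<Rightarrow> 'a::field) set" where
  "cl_center n = (if even n then cl_grade n 0
     else {x \<in> cl_carrier n. \<forall>A. x A \<noteq> 0 \<longrightarrow> (card A = 0 \<or> card A = n)})"

definition cl_center_units :: "(nat \<Rightarrow> 'a::field) \<Rightarrow> nat \<Rightarrow> (nat set \<Rightarrow> 'a) set" where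
  "cl_center_units eta n = cl_center n \<inter> cl_units eta n"

definition cl_Gamma :: "(nat \<Rightarrow> 'a::field) \<Rightarrow> nat \<Rightarrow> (nat set \<Rightarrow> 'a) set \<Rightarrow> (nat set \<Rightarrow> 'a) set" where
  "cl_Gamma eta n L = {T \<in> cl_units eta n.
      \<forall>U \<in> L. cl_mult eta n (cl_mult eta n T U) (cl_inv eta n T) \<in> L}"

definition cl_A :: "(nat \<Rightarrow> 'a::field) \<Rightarrow> nat \<Rightarrow> (nat set \<Rightarrow> 'a) set" where
  "cl_A eta n = {T \<in> cl_units eta n. cl_mult eta n (cl_rev T) T \<in> cl_center_units eta n}"

text \<open>Metrics: real signature (p,q): first p generators square to 1, the rest to -1;
complex: all square to 1.\<close>
definition real_sig :: "nat \<Rightarrow> nat \<Rightarrow> real" where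
  "real_sig p = (\<lambda>c. if c < p then 1 else -1)"

definition complex_sig :: "nat \<Rightarrow> complex" where
  "complex_sig = (\<lambda>c. 1)"

end

theory Submission
  imports Defs
begin

text \<open>Write ~T for the reversion of T. The spaces C^{01} and C^{23} are the eigenspaces of
  reversion for the eigenvalues 1 and -1. As reversion is an anti-automorphism, for invertible T
  and U in one of them, T U T\<inverse> lies in the same space iff ~(T\<inverse>) U ~T = T U T\<inverse>, i.e. iff U
  commutes with ~T T. Since ~T T is automatically invertible, T \<in> A iff ~T T is central. So it
  remains to show, by computing the signs of products of blades, that an element commuting with
  all vectors e_i is central, and that so is a reversion invariant element commuting with all
  bivectors and trivectors when n \<ge> 2.\<close>

section \<open>Signs of products of basis blades\<close>

lemma sym_diff_cancel_left [simp]: "sym_diff A (sym_diff A B) = B"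
  by blast

lemma sym_diff_cancel_right [simp]: "sym_diff (sym_diff A B) B = A"
  by blast

lemma sym_diff_cancel_left' [simp]: "sym_diff B (sym_diff A B) = A"
  by blast

lemma bsign_empty_left [simp]: "bsign eta {} B = 1"
  by (simp add: bsign_def)

lemma bsign_empty_right [simp]: "bsign eta A {} = 1"
  by (simp add: bsign_def)

definition inversion_sign :: "nat set \<Rightarrow> nat set \<Rightarrow> 'a::field" where
  "inversion_sign A B = (\<Prod>a\<in>A. \<Prod>b\<in>B. if b < a then -1 else 1)"

lemma neg_one_power_card_inversions:
  assumes "finite A" "finite B"
  shows "(-1::'a::field) ^ card {(a, b). a \<in> A \<and> b \<in> B \<and> b < a} = inversion_sign A B"
proof -
  have pairs: "{(a, b). a \<in> A \<and> b \<in> B \<and> b < a} = Sigma A (\<lambda>a. {b\<in>B. b < a})"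
    by auto
  have "(-1::'a) ^ card {(a, b). a \<in> A \<and> b \<in> B \<and> b < a} = (\<Prod>a\<in>A. (-1) ^ card {b\<in>B. b < a})"
    unfolding pairs using assms by (simp add: power_sum)
  also have "\<dots> = inversion_sign A B"
    unfolding inversion_sign_def
    using assms prod.inter_filter[of B "\<lambda>_. -1::'a"] by (intro prod.cong) auto
  finally show ?thesis .
qed

lemma bsign_eq_inversion_sign:
  "finite A \<Longrightarrow> finite B \<Longrightarrow> bsign eta A B = inversion_sign A B * (\<Prod>c\<in>A \<inter> B. eta c)"
  unfolding bsign_def by (simp add: neg_one_power_card_inversions)

lemma prod_sym_diff:
  fixes g :: "'b \<Rightarrow> 'a::comm_ring_1"
  assumes "finite A" "finite B" "\<And>x. g x * g x = 1"
  shows "prod g (sym_diff A B) = prod g A * prod g B"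
proof -
  have diffs: "A - A \<inter> B = A - B" "B - A \<inter> B = B - A"
    by blast+
  then have split_A: "prod g A = prod g (A - B) * prod g (A \<inter> B)"
    using assms(1) prod.subset_diff[of "A \<inter> B" A g] by simp
  have split_B: "prod g B = prod g (B - A) * prod g (A \<inter> B)"
    using assms(2) prod.subset_diff[of "A \<inter> B" B g] diffs by simp
  have "prod g (A \<inter> B) * prod g (A \<inter> B) = 1"
    using assms by (simp add: prod.distrib[symmetric])
  then have "prod g A * prod g B = prod g (A - B) * prod g (B - A)"
    unfolding split_A split_B by (metis mult.assoc mult.left_commute mult.right_neutral)
  also have "\<dots> = prod g (sym_diff A B)"
    using assms by (subst prod.union_disjoint) auto
  finally show ?thesis ..
qed

lemma inversion_sign_sym_diff_left:
  "finite A \<Longrightarrow> finite B \<Longrightarrow> finite E \<Longrightarrow>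
    (inversion_sign (sym_diff A B) E :: 'a::field) = inversion_sign A E * inversion_sign B E"
  unfolding inversion_sign_def
  by (rule prod_sym_diff) (auto simp: prod.distrib[symmetric] intro!: prod.neutral)

lemma inversion_sign_sym_diff_right:
  "finite A \<Longrightarrow> finite B \<Longrightarrow> finite E \<Longrightarrow>
    (inversion_sign A (sym_diff B E) :: 'a::field) = inversion_sign A B * inversion_sign A E"
  unfolding inversion_sign_def by (simp add: prod.distrib[symmetric] prod_sym_diff)

lemma prod_Int_sym_diff_cocycle:
  assumes "finite A" "finite B" "finite E"
  shows "(\<Prod>c\<in>A \<inter> B. eta c) * (\<Prod>c\<in>sym_diff A B \<inter> E. eta c)
       = (\<Prod>c\<in>B \<inter> E. eta c) * (\<Prod>c\<in>A \<inter> sym_diff B E. eta c :: 'a::comm_monoid_mult)"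
proof -
  have "(\<Prod>c\<in>A \<inter> B. eta c) * (\<Prod>c\<in>sym_diff A B \<inter> E. eta c)
      = (\<Prod>c\<in>(A \<inter> B) \<union> (sym_diff A B \<inter> E). eta c)"
    using assms by (subst prod.union_disjoint) auto
  also have "(A \<inter> B) \<union> (sym_diff A B \<inter> E) = (B \<inter> E) \<union> (A \<inter> sym_diff B E)"
    by blast
  also have "(\<Prod>c\<in>(B \<inter> E) \<union> (A \<inter> sym_diff B E). eta c)
      = (\<Prod>c\<in>B \<inter> E. eta c) * (\<Prod>c\<in>A \<inter> sym_diff B E. eta c)"
    using assms by (subst prod.union_disjoint) auto
  finally show ?thesis .
qed

lemma bsign_cocycle:
  assumes "finite A" "finite B" "finite E"
  shows "bsign eta A B * bsign eta (sym_diff A B) E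
       = bsign eta B E * (bsign eta A (sym_diff B E) :: 'a::field)"
  using assms prod_Int_sym_diff_cocycle[OF assms, of eta]
  by (simp add: bsign_eq_inversion_sign inversion_sign_sym_diff_left
      inversion_sign_sym_diff_right mult_ac)

lemma card_inversions_add:
  fixes A B :: "nat set"
  assumes "finite A" "finite B"
  shows "card {(a, b). a \<in> A \<and> b \<in> B \<and> b < a} + card {(a, b). a \<in> B \<and> b \<in> A \<and> b < a}
         + card (A \<inter> B) = card A * card B"
proof -
  let ?X1 = "{(a, b). a \<in> A \<and> b \<in> B \<and> b < a}"
  let ?X2 = "{(a, b). a \<in> A \<and> b \<in> B \<and> a < b}"
  let ?X3 = "{(a, b). a \<in> A \<and> b \<in> B \<and> a = b}"
  have fin: "finite ?X1" "finite ?X2" "finite ?X3"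
    by (rule finite_subset[of _ "A \<times> B"], use assms in auto)+
  have "card ?X2 = card {(a, b). a \<in> B \<and> b \<in> A \<and> b < a}"
    by (rule bij_betw_same_card[of "\<lambda>(a,b). (b,a)"]) (auto simp: bij_betw_def inj_on_def image_def)
  moreover have "card ?X3 = card (A \<inter> B)"
    by (rule bij_betw_same_card[of "\<lambda>(a,b). a"]) (auto simp: bij_betw_def inj_on_def image_def)
  moreover have "A \<times> B = ?X1 \<union> ?X2 \<union> ?X3"
    by auto
  then have "card (A \<times> B) = card ?X1 + card ?X2 + card ?X3"
    using fin by (simp add: card_Un_disjoint disjoint_iff)
  ultimately show ?thesis
    by (simp add: card_cartesian_product)
qed

lemma bsign_swap:
  assumes "finite A" "finite B"
  shows "bsign eta B A = (-1) ^ (card A * card B + card (A \<inter> B)) * (bsign eta A B :: 'a::field)"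
proof -
  let ?i = "card {(a, b). a \<in> A \<and> b \<in> B \<and> b < a}"
  let ?j = "card {(a, b). a \<in> B \<and> b \<in> A \<and> b < a}"
  have "card A * card B + card (A \<inter> B) + ?i = ?j + 2 * (?i + card (A \<inter> B))"
    using card_inversions_add[OF assms] by simp
  then have "(-1::'a) ^ ?j = (-1) ^ (card A * card B + card (A \<inter> B) + ?i)"
    by (simp add: power_add power_mult)
  then have "(-1::'a) ^ ?j = (-1) ^ (card A * card B + card (A \<inter> B)) * (-1) ^ ?i"
    by (simp add: power_add)
  then show ?thesis
    unfolding bsign_def by (simp add: Int_commute mult.assoc)
qed

lemma eq_neg_self_iff: "(2::'a::field) \<noteq> 0 \<Longrightarrow> a = - a \<longleftrightarrow> (a::'a) = 0"
  by (simp add: eq_neg_iff_add_eq_0 flip: mult_2)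

lemma bsign_commute_iff:
  fixes eta :: "nat \<Rightarrow> 'a::field"
  assumes "finite A" "finite B" "\<And>c. eta c \<noteq> 0" "(2::'a) \<noteq> 0"
  shows "bsign eta A B = bsign eta B A \<longleftrightarrow> even (card A * card B + card (A \<inter> B))"
proof -
  have "bsign eta A B \<noteq> 0"
    using assms by (simp add: bsign_def)
  then show ?thesis
    using bsign_swap[OF assms(1,2), of eta] eq_neg_self_iff[OF assms(4)]
    by (cases "even (card A * card B + card (A \<inter> B))") auto
qed

section \<open>Reversion\<close>

definition rev_sign :: "nat set \<Rightarrow> 'a::field" where
  "rev_sign A = (-1) ^ (card A choose 2)"

lemma two_times_choose_two: "2 * (n choose 2) = n * (n - 1)"
  by (cases n) (simp_all add: choose_two)

lemma choose_two_add: "(a + b) choose 2 = (a choose 2) + (b choose 2) + a * b"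
proof -
  have "2 * ((a + b) choose 2) = 2 * ((a choose 2) + (b choose 2) + a * b)"
    unfolding distrib_left two_times_choose_two by (cases a; cases b) (auto simp: algebra_simps)
  then show ?thesis
    by simp
qed

lemma card_sym_diff:
  assumes "finite A" "finite B"
  shows "card (sym_diff A B) + 2 * card (A \<inter> B) = card A + card B"
proof -
  have "card (sym_diff A B) = card (A - B) + card (B - A)"
    using assms by (subst card_Un_disjoint) auto
  moreover have "card (A - B) + card (A \<inter> B) = card A" "card (B - A) + card (A \<inter> B) = card B"
    using assms card_Diff_subset_Int[of A B] card_Diff_subset_Int[of B A]
      card_mono[of A "A \<inter> B"] card_mono[of B "A \<inter> B"] by (auto simp: Int_commute)
  ultimately show ?thesis
    by simp
qed

lemma rev_sign_sym_diff:
  assumes "finite A" "finite B"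
  shows "rev_sign (sym_diff A B) * bsign eta A B = rev_sign A * rev_sign B * (bsign eta B A :: 'a::field)"
proof -
  let ?a = "card A" and ?b = "card B" and ?k = "card (A \<inter> B)" and ?s = "card (sym_diff A B)"
  have "(?a choose 2) + (?b choose 2) + ?a * ?b = (?s + 2 * ?k) choose 2"
    using card_sym_diff[OF assms] choose_two_add[of ?a ?b] by simp
  also have "\<dots> = (?s choose 2) + (2 * ?k choose 2) + ?s * (2 * ?k)"
    by (rule choose_two_add)
  finally have sum_eq: "(?s choose 2) + 2 * (?k * ?k + ?s * ?k) = (?a choose 2) + (?b choose 2) + (?a * ?b + ?k)"
    using two_times_choose_two[of "2 * ?k"] by (cases ?k) (auto simp: algebra_simps)
  have "(-1::'a) ^ (?s choose 2) = (-1) ^ ((?s choose 2) + 2 * (?k * ?k + ?s * ?k))"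
    by (simp add: power_add power_mult)
  then have "rev_sign (sym_diff A B) = rev_sign A * rev_sign B * ((-1::'a) ^ (?a * ?b + ?k))"
    unfolding rev_sign_def sum_eq by (simp add: power_add)
  then show ?thesis
    unfolding bsign_swap[OF assms, of eta] by (simp only: mult.assoc)
qed

lemma rev_sign_eq: "rev_sign A = (if card A mod 4 = 0 \<or> card A mod 4 = 1 then 1 else (-1::'a::field))"
proof -
  define q r where "q = card A div 4" and "r = card A mod 4"
  have "card A = 4 * q + r" "r < 4"
    unfolding q_def r_def by simp_all
  moreover have "4 * q choose 2 = 2 * (q * (4 * q - 1))"
    using two_times_choose_two[of "4 * q"] by simp
  ultimately have "even (card A choose 2) \<longleftrightarrow> even (r choose 2)"
    using choose_two_add[of "4 * q" r] by simp
  moreover have "r = 0 \<or> r = 1 \<or> r = 2 \<or> r = 3"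
    using \<open>r < 4\<close> by auto
  ultimately show ?thesis
    unfolding rev_sign_def r_def[symmetric] by (auto simp: choose_two)
qed

lemma cl_rev_eq: "cl_rev x = (\<lambda>A. rev_sign A * x A)"
  by (simp add: cl_rev_def rev_sign_def choose_two)

lemma cl_rev_rev [simp]: "cl_rev (cl_rev x) = x"
  by (simp add: cl_rev_eq rev_sign_def flip: power_add mult.assoc)

lemma cl_rev_carrier: "x \<in> cl_carrier n \<Longrightarrow> cl_rev x \<in> cl_carrier n"
  by (simp add: cl_carrier_def cl_rev_eq)

lemma cl_rev_one [simp]: "cl_rev cl_one = cl_one"
  by (rule ext) (simp add: cl_rev_eq cl_one_def rev_sign_def choose_two)

section \<open>The center and the reversion eigenspaces\<close>

lemma cl_center_iff:
  "z \<in> cl_center n \<longleftrightarrow> z \<in> cl_carrier n \<and> (\<forall>A. z A \<noteq> 0 \<longrightarrow> A = {} \<or> (A = {..<n} \<and> odd n))"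
proof -
  have "(if even n then card A = 0 else card A = 0 \<or> card A = n) \<longleftrightarrow> A = {} \<or> (A = {..<n} \<and> odd n)"
    if "A \<subseteq> {..<n}" for A
    using that card_subset_eq[of "{..<n}" A] finite_subset[OF that] by auto
  then show ?thesis
    unfolding cl_center_def cl_grade_def cl_carrier_def by (cases "even n") auto
qed

definition cl_rev_eigenspace :: "nat \<Rightarrow> 'a::field \<Rightarrow> (nat set \<Rightarrow> 'a) set" where
  "cl_rev_eigenspace n s = {V \<in> cl_carrier n. cl_rev V = (\<lambda>A. s * V A)}"

lemma cl_rev_eigenspace_iff:
  "V \<in> cl_rev_eigenspace n s \<longleftrightarrow> V \<in> cl_carrier n \<and> (\<forall>A. V A \<noteq> 0 \<longrightarrow> rev_sign A = s)"
  by (auto simp: cl_rev_eigenspace_def cl_rev_eq fun_eq_iff)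

lemma rev_sign_eq_one_iff:
  "(2::'a::field) \<noteq> 0 \<Longrightarrow> rev_sign A = (1::'a) \<longleftrightarrow> card A mod 4 = 0 \<or> card A mod 4 = 1"
  using eq_neg_self_iff[of "1::'a"] by (auto simp: rev_sign_eq)

lemma rev_sign_eq_neg_one_iff:
  "(2::'a::field) \<noteq> 0 \<Longrightarrow> rev_sign A = (-1::'a) \<longleftrightarrow> card A mod 4 = 2 \<or> card A mod 4 = 3"
  using eq_neg_self_iff[of "1::'a"] by (auto simp: rev_sign_eq)

lemma cl_bar2_0_1_eq:
  "(2::'a::field) \<noteq> 0 \<Longrightarrow> cl_bar2 n 0 1 = (cl_rev_eigenspace n 1 :: (nat set \<Rightarrow> 'a) set)"
  by (auto simp: cl_bar2_def cl_rev_eigenspace_iff rev_sign_eq_one_iff)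

lemma cl_bar2_2_3_eq:
  "(2::'a::field) \<noteq> 0 \<Longrightarrow> cl_bar2 n 2 3 = (cl_rev_eigenspace n (-1) :: (nat set \<Rightarrow> 'a) set)"
  by (auto simp: cl_bar2_def cl_rev_eigenspace_iff rev_sign_eq_neg_one_iff)

lemma cl_carrier_outside: "x \<in> cl_carrier n \<Longrightarrow> \<not> A \<subseteq> {..<n} \<Longrightarrow> x A = 0"
  by (auto simp: cl_carrier_def)

definition blade :: "nat set \<Rightarrow> nat set \<Rightarrow> 'a::field" where
  "blade B = (\<lambda>X. if X = B then 1 else 0)"

section \<open>The Clifford product\<close>

locale clifford_algebra =
  fixes eta :: "nat \<Rightarrow> 'a::field" and n :: nat
begin

abbreviation cmult (infixl "\<odot>" 70) where
  "x \<odot> y \<equiv> cl_mult eta n x y"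

lemma cl_mult_apply:
  "C \<subseteq> {..<n} \<Longrightarrow> (x \<odot> y) C
     = (\<Sum>A\<in>Pow {..<n}. x A * y (sym_diff A C) * bsign eta A (sym_diff A C))"
  by (simp add: cl_mult_def)

lemma cl_mult_apply_outside: "\<not> C \<subseteq> {..<n} \<Longrightarrow> (x \<odot> y) C = 0"
  by (simp add: cl_mult_def)

lemma cl_mult_carrier: "x \<odot> y \<in> cl_carrier n"
  by (auto simp: cl_carrier_def cl_mult_def)

lemma sum_Pow_sym_diff_left:
  "A \<subseteq> {..<n} \<Longrightarrow> (\<Sum>C\<in>Pow {..<n}. f C) = (\<Sum>B\<in>Pow {..<n}. f (sym_diff A B))"
  by (rule sum.reindex_bij_witness[of _ "sym_diff A" "sym_diff A"]) auto

lemma sum_Pow_sym_diff_right: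
  "C \<subseteq> {..<n} \<Longrightarrow> (\<Sum>B\<in>Pow {..<n}. f B) = (\<Sum>A\<in>Pow {..<n}. f (sym_diff A C))"
  by (rule sum.reindex_bij_witness[of _ "\<lambda>B. sym_diff B C" "\<lambda>B. sym_diff B C"]) auto

lemma cl_mult_assoc: "(x \<odot> y) \<odot> z = x \<odot> (y \<odot> z)"
proof (rule ext)
  fix D
  show "((x \<odot> y) \<odot> z) D = (x \<odot> (y \<odot> z)) D"
  proof (cases "D \<subseteq> {..<n}")
    case False
    then show ?thesis
      by (simp add: cl_mult_apply_outside)
  next
    case True
    let ?P = "Pow {..<n}" and ?b = "bsign eta"
    have "((x \<odot> y) \<odot> z) D = (\<Sum>C\<in>?P.
        (\<Sum>A\<in>?P. x A * y (sym_diff A C) * ?b A (sym_diff A C)) * z (sym_diff C D) * ?b C (sym_diff C D))"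
      using True by (simp add: cl_mult_apply)
    also have "\<dots> = (\<Sum>C\<in>?P. \<Sum>A\<in>?P.
        x A * y (sym_diff A C) * z (sym_diff C D) * (?b A (sym_diff A C) * ?b C (sym_diff C D)))"
      by (simp add: sum_distrib_left sum_distrib_right mult_ac)
    also have "\<dots> = (\<Sum>A\<in>?P. \<Sum>C\<in>?P.
        x A * y (sym_diff A C) * z (sym_diff C D) * (?b A (sym_diff A C) * ?b C (sym_diff C D)))"
      by (rule sum.swap)
    also have "\<dots> = (\<Sum>A\<in>?P. \<Sum>B\<in>?P.
        x A * y B * z (sym_diff (sym_diff A B) D) * (?b A B * ?b (sym_diff A B) (sym_diff (sym_diff A B) D)))"
      by (rule sum.cong[OF refl], subst sum_Pow_sym_diff_left) auto
    also have "\<dots> = (\<Sum>A\<in>?P. \<Sum>B\<in>?P.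
        x A * y B * z (sym_diff B (sym_diff A D)) * (?b B (sym_diff B (sym_diff A D)) * ?b A (sym_diff A D)))"
    proof (intro sum.cong refl)
      fix A B
      assume "A \<in> ?P" "B \<in> ?P"
      then have fin: "finite A" "finite B" "finite (sym_diff B (sym_diff A D))"
        using True finite_subset by blast+
      have "sym_diff (sym_diff A B) D = sym_diff B (sym_diff A D)"
        "sym_diff B (sym_diff B (sym_diff A D)) = sym_diff A D"
        by blast+
      then show "x A * y B * z (sym_diff (sym_diff A B) D) * (?b A B * ?b (sym_diff A B) (sym_diff (sym_diff A B) D))
          = x A * y B * z (sym_diff B (sym_diff A D)) * (?b B (sym_diff B (sym_diff A D)) * ?b A (sym_diff A D))"
        using bsign_cocycle[OF fin, of eta] by simp
    qed
    also have "\<dots> = (\<Sum>A\<in>?P. x A * (y \<odot> z) (sym_diff A D) * ?b A (sym_diff A D))"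
    proof (rule sum.cong[OF refl])
      fix A
      assume "A \<in> ?P"
      then have "sym_diff A D \<subseteq> {..<n}"
        using True by blast
      then show "(\<Sum>B\<in>?P. x A * y B * z (sym_diff B (sym_diff A D))
            * (?b B (sym_diff B (sym_diff A D)) * ?b A (sym_diff A D)))
          = x A * (y \<odot> z) (sym_diff A D) * ?b A (sym_diff A D)"
        by (simp add: cl_mult_apply sum_distrib_left sum_distrib_right mult_ac)
    qed
    also have "\<dots> = (x \<odot> (y \<odot> z)) D"
      using True by (simp add: cl_mult_apply)
    finally show ?thesis .
  qed
qed

lemma cl_mult_one_left: "x \<in> cl_carrier n \<Longrightarrow> cl_one \<odot> x = x"
proof (rule ext)
  fix C
  assume x: "x \<in> cl_carrier n"
  show "(cl_one \<odot> x) C = x C"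
  proof (cases "C \<subseteq> {..<n}")
    case True
    then have "(cl_one \<odot> x) C = (\<Sum>A\<in>Pow {..<n}. if A = {} then x (sym_diff A C) else 0)"
      by (intro trans[OF cl_mult_apply sum.cong]) (auto simp: cl_one_def)
    then show ?thesis
      by (simp add: sum.delta')
  qed (use x in \<open>simp add: cl_mult_apply_outside cl_carrier_outside\<close>)
qed

lemma cl_mult_one_right: "x \<in> cl_carrier n \<Longrightarrow> x \<odot> cl_one = x"
proof (rule ext)
  fix C
  assume x: "x \<in> cl_carrier n"
  show "(x \<odot> cl_one) C = x C"
  proof (cases "C \<subseteq> {..<n}")
    case True
    then have "(x \<odot> cl_one) C = (\<Sum>A\<in>Pow {..<n}. if A = C then x A else 0)"
      by (intro trans[OF cl_mult_apply sum.cong]) (auto simp: cl_one_def)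
    then show ?thesis
      using True by (simp add: sum.delta')
  qed (use x in \<open>simp add: cl_mult_apply_outside cl_carrier_outside\<close>)
qed

lemma cl_rev_mult: "cl_rev (x \<odot> y) = cl_rev y \<odot> cl_rev x"
proof (rule ext)
  fix C
  show "cl_rev (x \<odot> y) C = (cl_rev y \<odot> cl_rev x) C"
  proof (cases "C \<subseteq> {..<n}")
    case True
    let ?P = "Pow {..<n}" and ?b = "bsign eta"
    have "(cl_rev y \<odot> cl_rev x) C
        = (\<Sum>B\<in>?P. (rev_sign B * y B) * (rev_sign (sym_diff B C) * x (sym_diff B C)) * ?b B (sym_diff B C))"
      using True by (simp add: cl_mult_apply cl_rev_eq)
    also have "\<dots> = (\<Sum>A\<in>?P. (rev_sign (sym_diff A C) * y (sym_diff A C)) * (rev_sign A * x A)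
        * ?b (sym_diff A C) A)"
      using True by (subst sum_Pow_sym_diff_right[of C]) simp_all
    also have "\<dots> = (\<Sum>A\<in>?P. rev_sign C * (x A * y (sym_diff A C) * ?b A (sym_diff A C)))"
    proof (rule sum.cong[OF refl])
      fix A
      assume "A \<in> ?P"
      then have "finite A" "finite (sym_diff A C)"
        using True finite_subset by blast+
      from rev_sign_sym_diff[OF this, of eta]
      show "(rev_sign (sym_diff A C) * y (sym_diff A C)) * (rev_sign A * x A) * ?b (sym_diff A C) A
          = rev_sign C * (x A * y (sym_diff A C) * ?b A (sym_diff A C))"
        by (simp add: algebra_simps)
    qed
    also have "\<dots> = cl_rev (x \<odot> y) C"
      using True by (simp add: cl_mult_apply cl_rev_eq sum_distrib_left)
    finally show ?thesis
      by simp
  qed (simp add: cl_mult_apply_outside cl_rev_eq)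
qed

lemma cl_units_inverse:
  assumes "T \<in> cl_units eta n"
  shows "T \<in> cl_carrier n" "cl_inv eta n T \<in> cl_carrier n"
    "T \<odot> cl_inv eta n T = cl_one" "cl_inv eta n T \<odot> T = cl_one"
proof -
  obtain S where S: "S \<in> cl_carrier n" "T \<odot> S = cl_one" "S \<odot> T = cl_one"
    and T: "T \<in> cl_carrier n"
    using assms by (auto simp: cl_units_def)
  have "S' = S" if "S' \<in> cl_carrier n" "S' \<odot> T = cl_one" for S'
  proof -
    have "S' = S' \<odot> (T \<odot> S)"
      using S(2) cl_mult_one_right[OF that(1)] by simp
    also have "\<dots> = S"
      using that(2) cl_mult_one_left[OF S(1)] by (simp flip: cl_mult_assoc)
    finally show ?thesis .
  qed
  then have "cl_inv eta n T = S"
    unfolding cl_inv_def using S by blast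
  then show "T \<in> cl_carrier n" "cl_inv eta n T \<in> cl_carrier n"
    "T \<odot> cl_inv eta n T = cl_one" "cl_inv eta n T \<odot> T = cl_one"
    using S T by simp_all
qed

lemma cl_rev_units_inverse:
  assumes "T \<in> cl_units eta n"
  shows "cl_rev T \<odot> cl_rev (cl_inv eta n T) = cl_one" "cl_rev (cl_inv eta n T) \<odot> cl_rev T = cl_one"
  using cl_units_inverse[OF assms] by (simp_all flip: cl_rev_mult)

lemma conj_rev_eq_conj_iff_commute:
  assumes T: "T \<in> cl_units eta n" and U: "U \<in> cl_carrier n"
  shows "(cl_rev (cl_inv eta n T) \<odot> U) \<odot> cl_rev T = (T \<odot> U) \<odot> cl_inv eta n T
     \<longleftrightarrow> U \<odot> (cl_rev T \<odot> T) = (cl_rev T \<odot> T) \<odot> U"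
proof -
  define S R R' where "S = cl_inv eta n T" and "R = cl_rev T" and "R' = cl_rev S"
  note inv = cl_units_inverse[OF T, folded S_def]
  note rev_inv = cl_rev_units_inverse[OF T, folded S_def R_def R'_def]
  show ?thesis
    unfolding S_def[symmetric] R_def[symmetric] R'_def[symmetric]
  proof
    assume h: "(R' \<odot> U) \<odot> R = (T \<odot> U) \<odot> S"
    have "U \<odot> (R \<odot> T) = ((R \<odot> R') \<odot> U) \<odot> (R \<odot> T)"
      using cl_mult_one_left[OF U] rev_inv by simp
    also have "\<dots> = R \<odot> (((R' \<odot> U) \<odot> R) \<odot> T)"
      by (simp add: cl_mult_assoc)
    also have "\<dots> = ((R \<odot> T) \<odot> U) \<odot> (S \<odot> T)"
      unfolding h by (simp add: cl_mult_assoc)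
    also have "\<dots> = (R \<odot> T) \<odot> U"
      using inv cl_mult_one_right[OF cl_mult_carrier] by simp
    finally show "U \<odot> (R \<odot> T) = (R \<odot> T) \<odot> U" .
  next
    assume h: "U \<odot> (R \<odot> T) = (R \<odot> T) \<odot> U"
    have "(R' \<odot> U) \<odot> R = ((R' \<odot> U) \<odot> R) \<odot> (T \<odot> S)"
      using inv cl_mult_one_right[OF cl_mult_carrier] by simp
    also have "\<dots> = R' \<odot> ((U \<odot> (R \<odot> T)) \<odot> S)"
      by (simp add: cl_mult_assoc)
    also have "\<dots> = (R' \<odot> R) \<odot> ((T \<odot> U) \<odot> S)"
      unfolding h by (simp add: cl_mult_assoc)
    also have "\<dots> = (T \<odot> U) \<odot> S"
      using rev_inv cl_mult_one_left[OF cl_mult_carrier] by simp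
    finally show "(R' \<odot> U) \<odot> R = (T \<odot> U) \<odot> S" .
  qed
qed

lemma cl_mult_scale_left: "(\<lambda>A. s * x A) \<odot> y = (\<lambda>A. s * (x \<odot> y) A)"
  by (rule ext) (simp add: cl_mult_def sum_distrib_left mult_ac)

lemma cl_mult_scale_right: "x \<odot> (\<lambda>A. s * y A) = (\<lambda>A. s * (x \<odot> y) A)"
  by (rule ext) (simp add: cl_mult_def sum_distrib_left mult_ac)

lemma cl_Gamma_rev_eigenspace_iff:
  assumes s: "s \<noteq> 0" and T: "T \<in> cl_units eta n"
  shows "T \<in> cl_Gamma eta n (cl_rev_eigenspace n s)
     \<longleftrightarrow> (\<forall>U \<in> cl_rev_eigenspace n s. U \<odot> (cl_rev T \<odot> T) = (cl_rev T \<odot> T) \<odot> U)"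
proof -
  have "(T \<odot> U) \<odot> cl_inv eta n T \<in> cl_rev_eigenspace n s
      \<longleftrightarrow> U \<odot> (cl_rev T \<odot> T) = (cl_rev T \<odot> T) \<odot> U"
    if U: "U \<in> cl_rev_eigenspace n s" for U
  proof -
    have Uc: "U \<in> cl_carrier n" and rU: "cl_rev U = (\<lambda>A. s * U A)"
      using U by (auto simp: cl_rev_eigenspace_def)
    have "cl_rev ((T \<odot> U) \<odot> cl_inv eta n T)
        = (\<lambda>A. s * ((cl_rev (cl_inv eta n T) \<odot> U) \<odot> cl_rev T) A)"
      by (simp add: cl_rev_mult rU cl_mult_assoc cl_mult_scale_left cl_mult_scale_right)
    then have "(T \<odot> U) \<odot> cl_inv eta n T \<in> cl_rev_eigenspace n s
        \<longleftrightarrow> (cl_rev (cl_inv eta n T) \<odot> U) \<odot> cl_rev T = (T \<odot> U) \<odot> cl_inv eta n T"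
      using s by (simp add: cl_rev_eigenspace_def cl_mult_carrier fun_eq_iff)
    then show ?thesis
      using conj_rev_eq_conj_iff_commute[OF T Uc] by simp
  qed
  then show ?thesis
    using T unfolding cl_Gamma_def by auto
qed

lemma cl_A_iff_center:
  assumes T: "T \<in> cl_units eta n"
  shows "T \<in> cl_A eta n \<longleftrightarrow> cl_rev T \<odot> T \<in> cl_center n"
proof -
  define S where "S = cl_inv eta n T"
  note inv = cl_units_inverse[OF T, folded S_def]
  note rev_inv = cl_rev_units_inverse[OF T, folded S_def]
  have "(cl_rev T \<odot> T) \<odot> (S \<odot> cl_rev S) = cl_rev T \<odot> ((T \<odot> S) \<odot> cl_rev S)"
    by (simp add: cl_mult_assoc)
  also have "\<dots> = cl_one"
    using inv rev_inv cl_mult_one_left[OF cl_rev_carrier[OF inv(2)]] by simp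
  finally have "(cl_rev T \<odot> T) \<odot> (S \<odot> cl_rev S) = cl_one" .
  moreover have "(S \<odot> cl_rev S) \<odot> (cl_rev T \<odot> T) = S \<odot> ((cl_rev S \<odot> cl_rev T) \<odot> T)"
    by (simp add: cl_mult_assoc)
  then have "(S \<odot> cl_rev S) \<odot> (cl_rev T \<odot> T) = cl_one"
    using inv rev_inv cl_mult_one_left[OF inv(1)] by simp
  ultimately have "cl_rev T \<odot> T \<in> cl_units eta n"
    unfolding cl_units_def using cl_mult_carrier by blast
  then show ?thesis
    using T unfolding cl_A_def cl_center_units_def by auto
qed

lemma bsign_commute_if_commute_blade:
  assumes A: "A \<subseteq> {..<n}" and B: "B \<subseteq> {..<n}"
    and commute: "z \<odot> blade B = blade B \<odot> z" and zA: "z A \<noteq> 0"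
  shows "bsign eta A B = bsign eta B A"
proof -
  have C: "sym_diff A B \<subseteq> {..<n}"
    using A B by blast
  have "(z \<odot> blade B) (sym_diff A B) = (\<Sum>X\<in>Pow {..<n}. if X = A then z X * bsign eta X B else 0)"
    using C by (intro trans[OF cl_mult_apply sum.cong]) (auto simp: blade_def)
  also have "\<dots> = z A * bsign eta A B"
    using A by (simp add: sum.delta')
  finally have left: "(z \<odot> blade B) (sym_diff A B) = z A * bsign eta A B" .
  have "(blade B \<odot> z) (sym_diff A B) = (\<Sum>X\<in>Pow {..<n}. if X = B then z A * bsign eta X A else 0)"
    using C by (intro trans[OF cl_mult_apply sum.cong]) (auto simp: blade_def)
  also have "\<dots> = z A * bsign eta B A"
    using B by (simp add: sum.delta')
  finally show ?thesis
    using left commute zA by simp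
qed

lemma cl_mult_commute_if_bsign_commute:
  assumes "\<And>A B. A \<subseteq> {..<n} \<Longrightarrow> B \<subseteq> {..<n} \<Longrightarrow> z A \<noteq> 0 \<Longrightarrow> bsign eta A B = bsign eta B A"
  shows "z \<odot> x = x \<odot> z"
proof (rule ext)
  fix C
  show "(z \<odot> x) C = (x \<odot> z) C"
  proof (cases "C \<subseteq> {..<n}")
    case True
    have "(x \<odot> z) C = (\<Sum>B\<in>Pow {..<n}. x B * z (sym_diff B C) * bsign eta B (sym_diff B C))"
      using True by (rule cl_mult_apply)
    also have "\<dots> = (\<Sum>A\<in>Pow {..<n}. x (sym_diff A C) * z A * bsign eta (sym_diff A C) A)"
      using True by (subst sum_Pow_sym_diff_right[of C]) simp_all
    also have "\<dots> = (\<Sum>A\<in>Pow {..<n}. z A * x (sym_diff A C) * bsign eta A (sym_diff A C))"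
    proof (rule sum.cong[OF refl])
      fix A
      assume "A \<in> Pow {..<n}"
      then have "A \<subseteq> {..<n}" "sym_diff A C \<subseteq> {..<n}"
        using True by blast+
      then show "x (sym_diff A C) * z A * bsign eta (sym_diff A C) A
          = z A * x (sym_diff A C) * bsign eta A (sym_diff A C)"
        using assms[of A "sym_diff A C"] by (cases "z A = 0") simp_all
    qed
    also have "\<dots> = (z \<odot> x) C"
      using True by (simp add: cl_mult_apply)
    finally show ?thesis
      by simp
  qed (simp add: cl_mult_apply_outside)
qed

end

section \<open>Centralizers in the nondegenerate case\<close>

locale nondegenerate_clifford_algebra = clifford_algebra eta n for eta :: "nat \<Rightarrow> 'a::field" and n +
  assumes two_neq_zero: "(2::'a) \<noteq> 0" and eta_nonzero: "\<And>c. eta c \<noteq> 0"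
begin

lemma bsign_commute_iff_even:
  assumes "A \<subseteq> {..<n}" "B \<subseteq> {..<n}"
  shows "bsign eta A B = bsign eta B A \<longleftrightarrow> even (card A * card B + card (A \<inter> B))"
  using bsign_commute_iff[OF finite_subset[OF assms(1)] finite_subset[OF assms(2)] eta_nonzero two_neq_zero]
  by simp

lemma cl_center_commute:
  assumes z: "z \<in> cl_center n"
  shows "z \<odot> x = x \<odot> z"
proof (rule cl_mult_commute_if_bsign_commute)
  fix A B
  assume A: "A \<subseteq> {..<n}" and B: "B \<subseteq> {..<n}" and zA: "z A \<noteq> 0"
  then have "A = {} \<or> (A = {..<n} \<and> odd n)"
    using z cl_center_iff by blast
  then show "bsign eta A B = bsign eta B A"
  proof
    assume top: "A = {..<n} \<and> odd n"
    with B have "card A * card B + card (A \<inter> B) = (n + 1) * card B"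
      by (simp add: Int_absorb1)
    with top show ?thesis
      using bsign_commute_iff_even[OF A B] by simp
  qed simp
qed

text \<open>The vector e_i commutes with the blade e_A iff |A| + [i \<in> A] is even, so a nonempty
  blade commuting with all vectors has odd size and contains every index.\<close>

lemma cl_center_if_commute_vectors:
  assumes z: "z \<in> cl_carrier n" and commute: "\<And>i. i < n \<Longrightarrow> z \<odot> blade {i} = blade {i} \<odot> z"
  shows "z \<in> cl_center n"
  unfolding cl_center_iff
proof (intro conjI allI impI z)
  fix A
  assume zA: "z A \<noteq> 0"
  then have A: "A \<subseteq> {..<n}"
    using z by (auto simp: cl_carrier_def)
  have parity: "even (card A + card (A \<inter> {i}))" if "i < n" for i
    using bsign_commute_if_commute_blade[OF A _ commute[OF that] zA] bsign_commute_iff_even[OF A] that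
    by simp
  show "A = {} \<or> (A = {..<n} \<and> odd n)"
  proof (cases "A = {}")
    case False
    then obtain a where "a \<in> A"
      by blast
    with A parity[of a] have odd: "odd (card A)"
      by (auto simp: Int_absorb1)
    have "A = {..<n}"
    proof (rule ccontr)
      assume "A \<noteq> {..<n}"
      then obtain j where "j < n" "j \<notin> A"
        using A by blast
      with parity[of j] odd show False
        by (simp add: disjoint_iff)
    qed
    with odd show ?thesis
      by simp
  qed simp
qed

text \<open>A blade e_A with {} \<noteq> A \<noteq> {..<n} fails to commute with e_a e_j for a \<in> A, j \<notin> A.
  The top blade commutes with the trivectors only for odd n; for n = 2 there are no trivectors,
  and reversion invariance excludes the top blade instead.\<close>

lemma cl_center_if_commute_grade_2_3:
  assumes z: "z \<in> cl_carrier n" and rev_z: "cl_rev z = z" and n: "n \<ge> 2"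
    and commute: "\<And>B. B \<subseteq> {..<n} \<Longrightarrow> card B = 2 \<or> card B = 3 \<Longrightarrow> z \<odot> blade B = blade B \<odot> z"
  shows "z \<in> cl_center n"
  unfolding cl_center_iff
proof (intro conjI allI impI z)
  fix A
  assume zA: "z A \<noteq> 0"
  then have A: "A \<subseteq> {..<n}"
    using z by (auto simp: cl_carrier_def)
  have parity: "even (card A * card B + card (A \<inter> B))"
    if "B \<subseteq> {..<n}" "card B = 2 \<or> card B = 3" for B
    using bsign_commute_if_commute_blade[OF A that(1) commute[OF that] zA] bsign_commute_iff_even[OF A that(1)]
    by simp
  have "A = {} \<or> A = {..<n}"
  proof (rule ccontr)
    assume "\<not> (A = {} \<or> A = {..<n})"
    then obtain a j where "a \<in> A" "j < n" "j \<notin> A"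
      using A by blast
    moreover from this have "a \<noteq> j"
      by blast
    ultimately have "{a, j} \<subseteq> {..<n}" "card {a, j} = 2" "A \<inter> {a, j} = {a}"
      using A by auto
    then show False
      using parity[of "{a, j}"] by simp
  qed
  moreover have "odd n" if top: "A = {..<n}"
  proof (cases "n = 2")
    case True
    have "rev_sign A * z A = z A"
      using rev_z by (metis cl_rev_eq)
    moreover have "rev_sign A = (-1::'a)"
      using top True by (simp add: rev_sign_def)
    ultimately show ?thesis
      using zA eq_neg_self_iff[OF two_neq_zero, of "z A"] by simp
  next
    case False
    with n have "{0, 1, 2} \<subseteq> {..<n}" "card {0::nat, 1, 2} = 3" "A \<inter> {0, 1, 2} = {0, 1, 2}"
      using top by auto
    then show ?thesis
      using parity[of "{0, 1, 2}"] top by simp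
  qed
  ultimately show "A = {} \<or> (A = {..<n} \<and> odd n)"
    by blast
qed

lemma cl_A_eq_Gamma_rev_eigenspace:
  assumes s: "s \<noteq> 0"
    and center: "\<And>z. z \<in> cl_carrier n \<Longrightarrow> cl_rev z = z \<Longrightarrow>
      \<forall>U \<in> cl_rev_eigenspace n s. U \<odot> z = z \<odot> U \<Longrightarrow> z \<in> cl_center n"
  shows "cl_A eta n = cl_Gamma eta n (cl_rev_eigenspace n s)"
proof -
  have "T \<in> cl_A eta n \<longleftrightarrow> T \<in> cl_Gamma eta n (cl_rev_eigenspace n s)"
    if T: "T \<in> cl_units eta n" for T
  proof -
    have "cl_rev (cl_rev T \<odot> T) = cl_rev T \<odot> T"
      by (simp add: cl_rev_mult)
    then have "cl_rev T \<odot> T \<in> cl_center n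
        \<longleftrightarrow> (\<forall>U \<in> cl_rev_eigenspace n s. U \<odot> (cl_rev T \<odot> T) = (cl_rev T \<odot> T) \<odot> U)"
      using center[OF cl_mult_carrier] cl_center_commute by auto
    then show ?thesis
      using cl_A_iff_center[OF T] cl_Gamma_rev_eigenspace_iff[OF s T] by simp
  qed
  then show ?thesis
    unfolding cl_A_def cl_Gamma_def by blast
qed

lemma cl_A_eq_Gamma_bar2_0_1: "cl_A eta n = cl_Gamma eta n (cl_bar2 n 0 1)"
  unfolding cl_bar2_0_1_eq[OF two_neq_zero]
proof (rule cl_A_eq_Gamma_rev_eigenspace)
  fix z
  assume "z \<in> cl_carrier n" "\<forall>U \<in> cl_rev_eigenspace n 1. U \<odot> z = z \<odot> U"
  moreover have "(blade {i} :: nat set \<Rightarrow> 'a) \<in> cl_rev_eigenspace n 1" if "i < n" for i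
    using that rev_sign_eq_one_iff[OF two_neq_zero, of "{i}"]
    by (auto simp: cl_rev_eigenspace_iff blade_def cl_carrier_def)
  ultimately show "z \<in> cl_center n"
    by (intro cl_center_if_commute_vectors) auto
qed simp

lemma cl_A_eq_Gamma_bar2_2_3: "n \<ge> 2 \<Longrightarrow> cl_A eta n = cl_Gamma eta n (cl_bar2 n 2 3)"
  unfolding cl_bar2_2_3_eq[OF two_neq_zero]
proof (rule cl_A_eq_Gamma_rev_eigenspace)
  fix z
  assume "n \<ge> 2" "z \<in> cl_carrier n" "cl_rev z = z" "\<forall>U \<in> cl_rev_eigenspace n (-1). U \<odot> z = z \<odot> U"
  moreover have "(blade B :: nat set \<Rightarrow> 'a) \<in> cl_rev_eigenspace n (-1)"
    if "B \<subseteq> {..<n}" "card B = 2 \<or> card B = 3" for B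
    using that rev_sign_eq_neg_one_iff[OF two_neq_zero, of B]
    by (auto simp: cl_rev_eigenspace_iff blade_def cl_carrier_def)
  ultimately show "z \<in> cl_center n"
    by (intro cl_center_if_commute_grade_2_3) auto
qed simp

end

lemma nondegenerate_clifford_algebra_real_sig: "nondegenerate_clifford_algebra (real_sig p)"
  by unfold_locales (simp_all add: real_sig_def)

lemma nondegenerate_clifford_algebra_complex_sig: "nondegenerate_clifford_algebra complex_sig"
  by unfold_locales (simp_all add: complex_sig_def)

theorem mainTheorem6:
  fixes n :: nat
  assumes "n \<ge> 2"
  shows "(\<forall>p q. p + q = n \<longrightarrow>
            cl_A (real_sig p) n = cl_Gamma (real_sig p) n (cl_bar2 n 0 1) \<and>
            cl_A (real_sig p) n = cl_Gamma (real_sig p) n (cl_bar2 n 2 3)) \<and>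
         (cl_A complex_sig n = cl_Gamma complex_sig n (cl_bar2 n 0 1) \<and>
          cl_A complex_sig n = cl_Gamma complex_sig n (cl_bar2 n 2 3))"
proof -
  note real = nondegenerate_clifford_algebra_real_sig
  note complex = nondegenerate_clifford_algebra_complex_sig
  show ?thesis
    using nondegenerate_clifford_algebra.cl_A_eq_Gamma_bar2_0_1[OF real]
      nondegenerate_clifford_algebra.cl_A_eq_Gamma_bar2_2_3[OF real assms]
      nondegenerate_clifford_algebra.cl_A_eq_Gamma_bar2_0_1[OF complex]
      nondegenerate_clifford_algebra.cl_A_eq_Gamma_bar2_2_3[OF complex assms]
    by simp
qed

end
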